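(* Let $X$ be a compact metric space and $f\colon X\to X$ an expansive homeomorphism with the shadowing property. Then $f$ has the L-shadowing property.
   Context: $f$ is expansive if there is $c>0$ such that for all $x\neq y$ there is $k\in\mathbb{Z}$ with $d(f^k(x),f^k(y))>c$. A $\delta$-pseudo orbit is $(x_k)_{k\in\mathbb{Z}}$ with $d(f(x_k),x_{k+1})<\delta$ for all $k$; a two-sided limit pseudo orbit satisfies $d(f(x_k),x_{k+1})\to0$ as $|k|\to\infty$. $z$ $\varepsilon$-shadows $(x_k)$ if $d(f^k(z),x_k)<\varepsilon$ for all $k$, and two-sided limit shadows it if $d(f^k(z),x_k)\to0$ as $|k|\to\infty$. $f$ has the shadowing property if for every $\varepsilon>0$ there is $\delta>0$ such that every $\delta$-pseudo orbit is $\varepsilon$-shadowed. $f$ has the L-shadowing property if for every $\varepsilon>0$ there is $\delta>0$ such that every $\delta$-pseudo orbit that is also a two-sided limit pseudo orbit is both $\varepsilon$-shadowed and two-sided limit shadowed by one and the same point. *)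

theory Defs
  imports "HOL-Analysis.Analysis"
begin

definition zitr :: "'a set \<Rightarrow> ('a \<Rightarrow> 'a) \<Rightarrow> int \<Rightarrow> 'a \<Rightarrow> 'a" where
  "zitr X f k x = (if 0 \<le> k then (f ^^ nat k) x else (inv_into X f ^^ nat (- k)) x)"

definition expansive :: "'a::metric_space set \<Rightarrow> ('a \<Rightarrow> 'a) \<Rightarrow> bool" where
  "expansive X f \<longleftrightarrow> (\<exists>c>0. \<forall>x\<in>X. \<forall>y\<in>X. x \<noteq> y \<longrightarrow>
      (\<exists>k::int. dist (zitr X f k x) (zitr X f k y) > c))"

definition pseudo_orbit :: "'a::metric_space set \<Rightarrow> ('a \<Rightarrow> 'a) \<Rightarrow> real \<Rightarrow> (int \<Rightarrow> 'a) \<Rightarrow> bool" where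
  "pseudo_orbit X f \<delta> xs \<longleftrightarrow> (\<forall>k. xs k \<in> X) \<and> (\<forall>k. dist (f (xs k)) (xs (k + 1)) < \<delta>)"

definition two_sided_limit_pseudo_orbit :: "'a::metric_space set \<Rightarrow> ('a \<Rightarrow> 'a) \<Rightarrow> (int \<Rightarrow> 'a) \<Rightarrow> bool" where
  "two_sided_limit_pseudo_orbit X f xs \<longleftrightarrow> (\<forall>k. xs k \<in> X) \<and>
     ((\<lambda>k. dist (f (xs k)) (xs (k + 1))) \<longlongrightarrow> 0) at_top \<and>
     ((\<lambda>k. dist (f (xs k)) (xs (k + 1))) \<longlongrightarrow> 0) at_bot"

definition eps_shadows :: "'a::metric_space set \<Rightarrow> ('a \<Rightarrow> 'a) \<Rightarrow> real \<Rightarrow> 'a \<Rightarrow> (int \<Rightarrow> 'a) \<Rightarrow> bool" where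
  "eps_shadows X f \<epsilon> z xs \<longleftrightarrow> (\<forall>k. dist (zitr X f k z) (xs k) < \<epsilon>)"

definition limit_shadows :: "'a::metric_space set \<Rightarrow> ('a \<Rightarrow> 'a) \<Rightarrow> 'a \<Rightarrow> (int \<Rightarrow> 'a) \<Rightarrow> bool" where
  "limit_shadows X f z xs \<longleftrightarrow>
     ((\<lambda>k. dist (zitr X f k z) (xs k)) \<longlongrightarrow> 0) at_top \<and>
     ((\<lambda>k. dist (zitr X f k z) (xs k)) \<longlongrightarrow> 0) at_bot"

definition shadowing_property :: "'a::metric_space set \<Rightarrow> ('a \<Rightarrow> 'a) \<Rightarrow> bool" where
  "shadowing_property X f \<longleftrightarrow> (\<forall>\<epsilon>>0. \<exists>\<delta>>0. \<forall>xs. pseudo_orbit X f \<delta> xs \<longrightarrow>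
      (\<exists>z\<in>X. eps_shadows X f \<epsilon> z xs))"

definition L_shadowing_property :: "'a::metric_space set \<Rightarrow> ('a \<Rightarrow> 'a) \<Rightarrow> bool" where
  "L_shadowing_property X f \<longleftrightarrow> (\<forall>\<epsilon>>0. \<exists>\<delta>>0. \<forall>xs.
      pseudo_orbit X f \<delta> xs \<and> two_sided_limit_pseudo_orbit X f xs \<longrightarrow>
      (\<exists>z\<in>X. eps_shadows X f \<epsilon> z xs \<and> limit_shadows X f z xs))"

end

theory Submission
  imports Defs
begin

text \<open>
  On a compact space expansivity with constant \<open>c\<close> is uniform: for every \<open>\<gamma> > 0\<close> there is \<open>N\<close> such that two orbits
  which stay \<open>c\<close>-close for \<open>|k| \<le> N\<close> start \<open>\<gamma>\<close>-close. Let \<open>z\<close> \<open>c/2\<close>-shadow a two-sided limit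
  pseudo orbit. Far out in either direction the pseudo orbit is a \<open>\<delta>\<close>-pseudo orbit for arbitrarily
  small \<open>\<delta>\<close>; completing that half by a true orbit and shadowing the result gives a point \<open>w\<close>
  that \<open>\<gamma>\<close>-shadows the pseudo orbit on a half-line. There the orbits of \<open>z\<close> and \<open>w\<close> are
  \<open>c\<close>-close on arbitrarily long windows, hence \<open>\<gamma>\<close>-close, so the orbit of \<open>z\<close> approaches the
  pseudo orbit.
\<close>

lemma funpow_in_closed: "(\<And>y. y \<in> X \<Longrightarrow> h y \<in> X) \<Longrightarrow> x \<in> X \<Longrightarrow> (h ^^ n) x \<in> X"
  by (induction n) auto

lemma zitr_in:
  assumes "homeomorphism X X f g" "x \<in> X"
  shows "zitr X f k x \<in> X"
proof -
  have "\<And>y. y \<in> X \<Longrightarrow> f y \<in> X" "\<And>y. y \<in> X \<Longrightarrow> inv_into X f y \<in> X"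
    using assms(1) unfolding homeomorphism_def by (auto intro: inv_into_into)
  then show ?thesis
    unfolding zitr_def using funpow_in_closed[OF _ assms(2)] by presburger
qed

lemma zitr_0 [simp]: "zitr X f 0 x = x"
  by (simp add: zitr_def)

lemma zitr_plus_1:
  assumes "homeomorphism X X f g" "x \<in> X"
  shows "zitr X f (k + 1) x = f (zitr X f k x)"
proof (cases "0 \<le> k")
  case True
  then have "nat (k + 1) = Suc (nat k)" by simp
  then show ?thesis using True by (simp add: zitr_def)
next
  case False
  let ?h = "inv_into X f"
  obtain m where m: "nat (- k) = Suc m"
    using False by (metis neg_0_less_iff_less not_le not0_implies_Suc zero_less_nat_eq less_irrefl)
  have "(?h ^^ m) x \<in> X"
    using assms by (intro funpow_in_closed) (auto simp: homeomorphism_def intro: inv_into_into)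
  then have "f (zitr X f k x) = (?h ^^ m) x"
    using False m assms(1) unfolding homeomorphism_def zitr_def by (simp add: f_inv_into_f)
  moreover have "zitr X f (k + 1) x = (?h ^^ m) x"
    using False m by (cases "k = -1") (auto simp: zitr_def nat_diff_distrib')
  ultimately show ?thesis by simp
qed

lemma zitr_minus_1:
  assumes "homeomorphism X X f g" "x \<in> X"
  shows "zitr X f (k - 1) x = g (zitr X f k x)"
proof -
  have "zitr X f k x = f (zitr X f (k - 1) x)"
    using zitr_plus_1[OF assms, of "k - 1"] by simp
  then show ?thesis
    using zitr_in[OF assms] assms(1) unfolding homeomorphism_def by metis
qed

lemma zitr_add:
  assumes "homeomorphism X X f g" "x \<in> X"
  shows "zitr X f (j + k) x = zitr X f j (zitr X f k x)"
proof (induction j rule: int_induct[where k = 0])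
  case (step1 i)
  have "zitr X f (i + 1 + k) x = f (zitr X f (i + k) x)"
    using zitr_plus_1[OF assms, of "i + k"] by (simp add: algebra_simps)
  then show ?case
    using step1 zitr_plus_1[OF assms(1) zitr_in[OF assms]] by simp
next
  case (step2 i)
  have "zitr X f (i - 1 + k) x = g (zitr X f (i + k) x)"
    using zitr_minus_1[OF assms, of "i + k"] by (simp add: algebra_simps)
  then show ?case
    using step2 zitr_minus_1[OF assms(1) zitr_in[OF assms]] by simp
qed simp

lemma continuous_on_zitr:
  assumes "homeomorphism X X f g"
  shows "continuous_on X (zitr X f k)"
proof (induction k rule: int_induct[where k = 0])
  case base
  then show ?case by (simp add: continuous_on_id')
next
  case (step1 i)
  have "continuous_on X (f \<circ> zitr X f i)"
    using step1(2) assms zitr_in[OF assms]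
    by (intro continuous_on_compose) (auto simp: homeomorphism_def intro: continuous_on_subset)
  then show ?case
    using zitr_plus_1[OF assms] by (simp add: o_def cong: continuous_on_cong)
next
  case (step2 i)
  have "continuous_on X (g \<circ> zitr X f i)"
    using step2(2) assms zitr_in[OF assms]
    by (intro continuous_on_compose) (auto simp: homeomorphism_def intro: continuous_on_subset)
  then show ?case
    using zitr_minus_1[OF assms] by (simp add: o_def cong: continuous_on_cong)
qed

lemma expansive_uniform:
  assumes "compact X" and hom: "homeomorphism X X f g"
    and exp: "\<forall>x\<in>X. \<forall>y\<in>X. x \<noteq> y \<longrightarrow> (\<exists>k. dist (zitr X f k x) (zitr X f k y) > c)"
    and "\<gamma> > 0"
  obtains N :: nat where "\<forall>x\<in>X. \<forall>y\<in>X.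
    (\<forall>k. \<bar>k\<bar> \<le> int N \<longrightarrow> dist (zitr X f k x) (zitr X f k y) \<le> c) \<longrightarrow> dist x y < \<gamma>"
proof (rule ccontr)
  assume "\<not> thesis"
  then have "\<forall>N::nat. \<exists>p \<in> X \<times> X. dist (fst p) (snd p) \<ge> \<gamma> \<and>
      (\<forall>k. \<bar>k\<bar> \<le> int N \<longrightarrow> dist (zitr X f k (fst p)) (zitr X f k (snd p)) \<le> c)"
    using that by (force simp: not_less)
  then obtain p where pX: "\<And>N. p N \<in> X \<times> X" and far: "\<And>N. dist (fst (p N)) (snd (p N)) \<ge> \<gamma>"
    and close: "\<And>N k. \<bar>k\<bar> \<le> int N \<Longrightarrow> dist (zitr X f k (fst (p N))) (zitr X f k (snd (p N))) \<le> c"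
    by metis
  obtain l r where lX: "l \<in> X \<times> X" and r: "strict_mono r" and lim: "(p \<circ> r) \<longlonglongrightarrow> l"
    using compact_imp_seq_compact[OF compact_Times[OF \<open>compact X\<close> \<open>compact X\<close>]] pX
    unfolding seq_compact_def by metis
  obtain a b where l: "l = (a, b)" and aX: "a \<in> X" and bX: "b \<in> X"
    using lX by auto
  have la: "(\<lambda>n. fst (p (r n))) \<longlonglongrightarrow> a" and lb: "(\<lambda>n. snd (p (r n))) \<longlonglongrightarrow> b"
    using tendsto_fst[OF lim] tendsto_snd[OF lim] by (simp_all add: l o_def)
  have "\<gamma> \<le> dist a b"
    using LIMSEQ_le_const[OF tendsto_dist[OF la lb]] far by blast
  then obtain k where k: "dist (zitr X f k a) (zitr X f k b) > c"
    using exp aX bX \<open>\<gamma> > 0\<close> by fastforce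
  have "(\<lambda>n. dist (zitr X f k (fst (p (r n)))) (zitr X f k (snd (p (r n)))))
      \<longlonglongrightarrow> dist (zitr X f k a) (zitr X f k b)"
    using pX by (intro tendsto_dist continuous_on_tendsto_compose[OF continuous_on_zitr[OF hom]]
        la lb aX bX) (auto simp: mem_Times_iff)
  moreover have "dist (zitr X f k (fst (p (r n)))) (zitr X f k (snd (p (r n)))) \<le> c"
    if "n \<ge> nat \<bar>k\<bar>" for n
    using close seq_suble[OF r, of n] that by simp
  ultimately have "dist (zitr X f k a) (zitr X f k b) \<le> c"
    using LIMSEQ_le_const2 by blast
  then show False
    using k by simp
qed

lemma shadowing_orbit_converges_along:
  fixes F :: "int filter"
  assumes "compact X" and hom: "homeomorphism X X f g"
    and exp: "\<forall>x\<in>X. \<forall>y\<in>X. x \<noteq> y \<longrightarrow> (\<exists>k. dist (zitr X f k x) (zitr X f k y) > c)"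
    and windows: "\<And>P N. eventually P F \<Longrightarrow> eventually (\<lambda>k. \<forall>i. \<bar>i\<bar> \<le> int N \<longrightarrow> P (k + i)) F"
    and tails: "\<And>\<gamma>. \<gamma> > 0 \<Longrightarrow> \<exists>w\<in>X. eventually (\<lambda>j. dist (zitr X f j w) (xs j) < \<gamma>) F"
    and zX: "z \<in> X" and zs: "\<And>k. dist (zitr X f k z) (xs k) < c / 2"
  shows "((\<lambda>k. dist (zitr X f k z) (xs k)) \<longlongrightarrow> 0) F"
proof (rule tendstoI)
  fix e :: real
  assume "e > 0"
  obtain N where N: "\<forall>x\<in>X. \<forall>y\<in>X.
      (\<forall>k. \<bar>k\<bar> \<le> int N \<longrightarrow> dist (zitr X f k x) (zitr X f k y) \<le> c) \<longrightarrow> dist x y < e / 2"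
    using expansive_uniform[OF \<open>compact X\<close> hom exp, of "e / 2"] \<open>e > 0\<close> by auto
  have "c > 0"
    using zs[of 0] zero_le_dist[of "zitr X f 0 z" "xs 0"] by linarith
  then obtain w where wX: "w \<in> X"
    and ws: "eventually (\<lambda>j. dist (zitr X f j w) (xs j) < min (e / 2) (c / 2)) F"
    using tails[of "min (e / 2) (c / 2)"] \<open>e > 0\<close> by auto
  have close_at: "dist (dist (zitr X f k z) (xs k)) 0 < e"
    if k: "\<forall>i. \<bar>i\<bar> \<le> int N \<longrightarrow> dist (zitr X f (k + i) w) (xs (k + i)) < min (e / 2) (c / 2)" for k
  proof -
    have "dist (zitr X f i (zitr X f k z)) (zitr X f i (zitr X f k w)) \<le> c"
      if "\<bar>i\<bar> \<le> int N" for i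
    proof -
      have "dist (zitr X f (k + i) z) (zitr X f (k + i) w)
          \<le> dist (zitr X f (k + i) z) (xs (k + i)) + dist (zitr X f (k + i) w) (xs (k + i))"
        by (rule dist_triangle2)
      also have "\<dots> \<le> c"
        using zs[of "k + i"] k that by (smt (verit) field_sum_of_halves)
      finally show ?thesis
        using zitr_add[OF hom zX] zitr_add[OF hom wX] by (simp add: add.commute)
    qed
    then have "dist (zitr X f k z) (zitr X f k w) < e / 2"
      using N zitr_in[OF hom zX] zitr_in[OF hom wX] by blast
    moreover have "dist (zitr X f k w) (xs k) < e / 2"
      using k[rule_format, of 0] by simp
    ultimately show ?thesis
      using dist_triangle[of "zitr X f k z" "xs k" "zitr X f k w"] by simp
  qed
  show "eventually (\<lambda>k. dist (dist (zitr X f k z) (xs k)) 0 < e) F"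
    using windows[OF ws, where N = N] by (rule eventually_mono) (rule close_at)
qed

lemma eventually_windows_at_top:
  fixes P :: "int \<Rightarrow> bool"
  assumes "eventually P at_top"
  shows "eventually (\<lambda>k. \<forall>i. \<bar>i\<bar> \<le> int N \<longrightarrow> P (k + i)) at_top"
proof -
  obtain K where "\<forall>k\<ge>K. P k"
    using assms by (auto simp: eventually_at_top_linorder)
  then have "\<forall>k\<ge>K + int N. \<forall>i. \<bar>i\<bar> \<le> int N \<longrightarrow> P (k + i)"
    by auto
  then show ?thesis
    unfolding eventually_at_top_linorder by blast
qed

lemma eventually_windows_at_bot:
  fixes P :: "int \<Rightarrow> bool"
  assumes "eventually P at_bot"
  shows "eventually (\<lambda>k. \<forall>i. \<bar>i\<bar> \<le> int N \<longrightarrow> P (k + i)) at_bot"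
proof -
  obtain K where "\<forall>k\<le>K. P k"
    using assms by (auto simp: eventually_at_bot_linorder)
  then have "\<forall>k\<le>K - int N. \<forall>i. \<bar>i\<bar> \<le> int N \<longrightarrow> P (k + i)"
    by auto
  then show ?thesis
    unfolding eventually_at_bot_linorder by blast
qed

lemma shadowing_eventually_at_top:
  assumes hom: "homeomorphism X X f g" and "shadowing_property X f"
    and xsX: "\<And>k. xs k \<in> X"
    and lim: "((\<lambda>k. dist (f (xs k)) (xs (k + 1))) \<longlongrightarrow> 0) at_top"
    and "\<gamma> > 0"
  shows "\<exists>w\<in>X. eventually (\<lambda>j. dist (zitr X f j w) (xs j) < \<gamma>) at_top"
proof -
  obtain \<delta> where "\<delta> > 0" and sh: "\<And>ys. pseudo_orbit X f \<delta> ys \<Longrightarrow> \<exists>w\<in>X. eps_shadows X f \<gamma> w ys"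
    using assms unfolding shadowing_property_def by blast
  then obtain K where K: "\<And>k. k \<ge> K \<Longrightarrow> dist (f (xs k)) (xs (k + 1)) < \<delta>"
    using lim unfolding tendsto_iff eventually_at_top_linorder by force
  define ys where "ys j = (if j \<ge> K then xs j else zitr X f (j - K) (xs K))" for j
  have ys_orbit: "ys j = zitr X f (j - K) (xs K)" if "j \<le> K" for j
    using that by (auto simp: ys_def)
  have "pseudo_orbit X f \<delta> ys"
    unfolding pseudo_orbit_def
  proof (intro conjI allI)
    fix k
    show "ys k \<in> X"
      using xsX zitr_in[OF hom xsX] by (simp add: ys_def)
    show "dist (f (ys k)) (ys (k + 1)) < \<delta>"
    proof (cases "k \<ge> K")
      case True
      then show ?thesis using K by (simp add: ys_def)
    next
      case False
      then have "ys (k + 1) = f (ys k)"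
        using ys_orbit[of k] ys_orbit[of "k + 1"] zitr_plus_1[OF hom xsX, of "k - K" K]
        by (simp add: algebra_simps)
      then show ?thesis using \<open>\<delta> > 0\<close> by simp
    qed
  qed
  then obtain w where "w \<in> X" and ws: "\<And>j. dist (zitr X f j w) (ys j) < \<gamma>"
    using sh unfolding eps_shadows_def by blast
  have "dist (zitr X f j w) (xs j) < \<gamma>" if "j \<ge> K" for j
    using ws[of j] that by (simp add: ys_def)
  then show ?thesis
    using \<open>w \<in> X\<close> unfolding eventually_at_top_linorder by blast
qed

lemma shadowing_eventually_at_bot:
  assumes hom: "homeomorphism X X f g" and "shadowing_property X f"
    and xsX: "\<And>k. xs k \<in> X"
    and lim: "((\<lambda>k. dist (f (xs k)) (xs (k + 1))) \<longlongrightarrow> 0) at_bot"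
    and "\<gamma> > 0"
  shows "\<exists>w\<in>X. eventually (\<lambda>j. dist (zitr X f j w) (xs j) < \<gamma>) at_bot"
proof -
  obtain \<delta> where "\<delta> > 0" and sh: "\<And>ys. pseudo_orbit X f \<delta> ys \<Longrightarrow> \<exists>w\<in>X. eps_shadows X f \<gamma> w ys"
    using assms unfolding shadowing_property_def by blast
  then obtain K where K: "\<And>k. k \<le> K \<Longrightarrow> dist (f (xs k)) (xs (k + 1)) < \<delta>"
    using lim unfolding tendsto_iff eventually_at_bot_linorder by force
  define ys where "ys j = (if j \<le> K then xs j else zitr X f (j - K) (xs K))" for j
  have ys_orbit: "ys j = zitr X f (j - K) (xs K)" if "j \<ge> K" for j
    using that by (auto simp: ys_def)
  have "pseudo_orbit X f \<delta> ys"
    unfolding pseudo_orbit_def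
  proof (intro conjI allI)
    fix k
    show "ys k \<in> X"
      using xsX zitr_in[OF hom xsX] by (simp add: ys_def)
    show "dist (f (ys k)) (ys (k + 1)) < \<delta>"
    proof (cases "k < K")
      case True
      then show ?thesis using K by (simp add: ys_def)
    next
      case False
      then have "ys (k + 1) = f (ys k)"
        using ys_orbit[of k] ys_orbit[of "k + 1"] zitr_plus_1[OF hom xsX, of "k - K" K]
        by (simp add: algebra_simps)
      then show ?thesis using \<open>\<delta> > 0\<close> by simp
    qed
  qed
  then obtain w where "w \<in> X" and ws: "\<And>j. dist (zitr X f j w) (ys j) < \<gamma>"
    using sh unfolding eps_shadows_def by blast
  have "dist (zitr X f j w) (xs j) < \<gamma>" if "j \<le> K" for j
    using ws[of j] that by (simp add: ys_def)
  then show ?thesis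
    using \<open>w \<in> X\<close> unfolding eventually_at_bot_linorder by blast
qed

theorem proposition3p2:
  fixes X :: "'a::metric_space set" and f :: "'a \<Rightarrow> 'a"
  assumes "compact X"
    and "\<exists>g. homeomorphism X X f g"
    and "expansive X f"
    and "shadowing_property X f"
  shows "L_shadowing_property X f"
  unfolding L_shadowing_property_def
proof (intro allI impI)
  fix \<epsilon> :: real
  assume "\<epsilon> > 0"
  obtain g where hom: "homeomorphism X X f g"
    using assms(2) by blast
  obtain c where "c > 0"
    and exp: "\<forall>x\<in>X. \<forall>y\<in>X. x \<noteq> y \<longrightarrow> (\<exists>k. dist (zitr X f k x) (zitr X f k y) > c)"
    using assms(3) unfolding expansive_def by blast
  obtain \<delta> where "\<delta> > 0"
    and sh: "\<And>xs. pseudo_orbit X f \<delta> xs \<Longrightarrow> \<exists>z\<in>X. eps_shadows X f (min \<epsilon> (c / 2)) z xs"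
    using assms(4) \<open>\<epsilon> > 0\<close> \<open>c > 0\<close> unfolding shadowing_property_def by (metis min_less_iff_conj half_gt_zero)
  have "\<exists>z\<in>X. eps_shadows X f \<epsilon> z xs \<and> limit_shadows X f z xs"
    if po: "pseudo_orbit X f \<delta> xs" and lpo: "two_sided_limit_pseudo_orbit X f xs" for xs
  proof -
    obtain z where "z \<in> X" and zs: "\<And>k. dist (zitr X f k z) (xs k) < min \<epsilon> (c / 2)"
      using sh[OF po] unfolding eps_shadows_def by blast
    have xsX: "\<And>k. xs k \<in> X"
      using po unfolding pseudo_orbit_def by blast
    note converges = shadowing_orbit_converges_along[OF \<open>compact X\<close> hom exp _ _ \<open>z \<in> X\<close>]
    have "limit_shadows X f z xs"
      unfolding limit_shadows_def using lpo zs
      by (auto simp: two_sided_limit_pseudo_orbit_def intro!: converges eventually_windows_at_top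
          eventually_windows_at_bot shadowing_eventually_at_top[OF hom assms(4) xsX]
          shadowing_eventually_at_bot[OF hom assms(4) xsX])
    then show ?thesis
      using \<open>z \<in> X\<close> zs unfolding eps_shadows_def by auto
  qed
  then show "\<exists>\<delta>>0. \<forall>xs. pseudo_orbit X f \<delta> xs \<and> two_sided_limit_pseudo_orbit X f xs \<longrightarrow>
      (\<exists>z\<in>X. eps_shadows X f \<epsilon> z xs \<and> limit_shadows X f z xs)"
    using \<open>\<delta> > 0\<close> by blast
qed

end
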